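(* Suppose there exist $i, d \ge 2$ with $i \le d$ such that $o(\alpha_d) + a_i \ge c_R$ and $o(\alpha_d) < \infty$. Then $R = k[[\widetilde{x}_1, \ldots, \widetilde{x}_n]]$ where $\widetilde{x}_j = x_j$ for $j \ne d$ and $\widetilde{x}_d = t^{a_d}$, and $\widetilde{x}_1,\ldots,\widetilde{x}_n$ are again Herzog–Kunz generators of $R$.
   Context: Let $k$ be an algebraically closed field of characteristic $0$ and let $(R,\mathfrak m)$ be a complete local noetherian domain of dimension $1$ containing $k$ with $R/\mathfrak m = k$; its normalization is $\overline R = k[[t]]$, $R \subseteq k[[t]]$ finite birational. Let $v$ be the $t$-adic valuation; for $A \subseteq k((t))$ let $v(A) = \{v(f): f\in A\setminus\{0\}\}$. The conductor is $\mathfrak C_R = \{x\in\overline R : x\overline R\subseteq R\} = t^{c_R}\overline R$, $c_R$ the conductor degree. The Herzog–Kunz sequence of $R$ is $v(\mathfrak m)\setminus v(\mathfrak m^2)$ listed increasingly as $a_1<\cdots<a_n$; Herzog–Kunz generators are $x_i \in R$ with $v(x_i)=a_i$ (these satisfy $R = k[[x_1,\ldots,x_n]]$). Fix Herzog–Kunz generators $x_1, \ldots, x_n$ with $x_1 = t^{a_1}$ and, for $i \ge 2$, $x_i = \alpha_i t^{a_i}$ with $\alpha_i \in k[[t]]$ a unit of constant term $1$. Define $o(\alpha_i) = v(\alpha_i - 1)$ (so $o(\alpha_i) = \infty$ if $\alpha_i = 1$). *)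

theory Defs
  imports "HOL-Computational_Algebra.Computational_Algebra" "HOL-Library.Extended_Nat"
begin

definition val_set :: "('a::field) fps set \<Rightarrow> nat set" where
  "val_set A = subdegree ` (A - {0})"

definition k_subalgebra :: "('a::field) fps set \<Rightarrow> bool" where
  "k_subalgebra R \<longleftrightarrow> (\<forall>c. fps_const c \<in> R) \<and>
     (\<forall>f\<in>R. \<forall>g\<in>R. f + g \<in> R \<and> f * g \<in> R \<and> - f \<in> R)"

definition conductor :: "('a::field) fps set \<Rightarrow> 'a fps set" where
  "conductor R = {x. \<forall>y. x * y \<in> R}"

text \<open>Conductor degree c_R, with C_R = t^(c_R) k[[t]].\<close>
definition conductor_degree :: "('a::field) fps set \<Rightarrow> nat" where
  "conductor_degree R = (LEAST c. fps_X ^ c \<in> conductor R)"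

text \<open>R \<subseteq> k[[t]] is a complete local noetherian one-dimensional domain containing k,
  with residue field k and normalization k[[t]] (finite birational): for a subring of
  k[[t]] containing k this amounts to the conductor being nonzero.\<close>
definition curve_ring :: "('a::field) fps set \<Rightarrow> bool" where
  "curve_ring R \<longleftrightarrow> k_subalgebra R \<and> conductor R \<noteq> {0}"

definition max_ideal :: "('a::field) fps set \<Rightarrow> 'a fps set" where
  "max_ideal R = {f \<in> R. fps_nth f 0 = 0}"

definition max_ideal_sq :: "('a::field) fps set \<Rightarrow> 'a fps set" where
  "max_ideal_sq R = {\<Sum>j<(N::nat). u j * w j | N u w.
      (\<forall>j<N. u j \<in> max_ideal R \<and> w j \<in> max_ideal R)}"

definition HK_set :: "('a::field) fps set \<Rightarrow> nat set" where
  "HK_set R = val_set (max_ideal R) - val_set (max_ideal_sq R)"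

definition HK_sequence :: "('a::field) fps set \<Rightarrow> nat \<Rightarrow> (nat \<Rightarrow> nat) \<Rightarrow> bool" where
  "HK_sequence R n a \<longleftrightarrow> strict_mono_on {1..n} a \<and> a ` {1..n} = HK_set R"

definition HK_generators ::
  "('a::field) fps set \<Rightarrow> nat \<Rightarrow> (nat \<Rightarrow> nat) \<Rightarrow> (nat \<Rightarrow> 'a fps) \<Rightarrow> bool" where
  "HK_generators R n a x \<longleftrightarrow> HK_sequence R n a \<and>
     (\<forall>j\<in>{1..n}. x j \<in> R \<and> x j \<noteq> 0 \<and> subdegree (x j) = a j)"

inductive_set poly_alg :: "('a::field) fps set \<Rightarrow> 'a fps set" for F where
  const: "fps_const c \<in> poly_alg F"
| gen: "f \<in> F \<Longrightarrow> f \<in> poly_alg F"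
| add: "p \<in> poly_alg F \<Longrightarrow> q \<in> poly_alg F \<Longrightarrow> p + q \<in> poly_alg F"
| mult: "p \<in> poly_alg F \<Longrightarrow> q \<in> poly_alg F \<Longrightarrow> p * q \<in> poly_alg F"

text \<open>k[[f_1,...,f_n]] for f_j \<in> t k[[t]]: the image of the substitution map
  k[[X_1..X_n]] \<rightarrow> k[[t]], i.e. the t-adic closure of k[f_1,...,f_n].\<close>
definition pseries_alg :: "('a::field) fps set \<Rightarrow> 'a fps set" where
  "pseries_alg F = {g. \<forall>N. \<exists>p\<in>poly_alg F. \<forall>m<N. fps_nth g m = fps_nth p m}"

definition ord_unit :: "('a::field) fps \<Rightarrow> enat" where
  "ord_unit \<alpha> = (if \<alpha> = 1 then \<infinity> else enat (subdegree (\<alpha> - 1)))"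

end

theory Submission
  imports Defs
begin

text \<open>
  Since \<open>o(\<alpha>\<^sub>d) + a\<^sub>d \<ge> o(\<alpha>\<^sub>d) + a\<^sub>i \<ge> c\<^sub>R\<close>, the difference
  \<open>x\<^sub>d - t\<^bsup>a\<^sub>d\<^esup> = (\<alpha>\<^sub>d - 1) t\<^bsup>a\<^sub>d\<^esup>\<close> lies in \<open>t\<^bsup>c\<^sub>R\<^esup> k[[t]] \<subseteq> R\<close>, so
  \<open>t\<^bsup>a\<^sub>d\<^esup> \<in> R\<close>, and it has the valuation of \<open>x\<^sub>d\<close>. It remains to see that any family
  \<open>F \<subseteq> R\<close> realising every Herzog-Kunz value generates \<open>R\<close>. Every element of \<open>R\<close> is
  approximated \<open>t\<close>-adically by polynomials in \<open>F\<close>, one coefficient at a time: if the error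
  term has valuation in \<open>v(m) - v(m\<^sup>2)\<close>, an element of \<open>F\<close> of that valuation removes its
  leading term; otherwise an element of \<open>m\<^sup>2\<close> of that valuation does, and such an element
  is approximated one order further than the elements of \<open>m\<close> it is built from.
  Conversely, an element of \<open>k[[F]]\<close> agrees with a polynomial in \<open>F\<close> below order
  \<open>c\<^sub>R\<close>, and the difference lies in the conductor.
\<close>

lemma k_subalgebra_closed:
  assumes "k_subalgebra R"
  shows "fps_const c \<in> R" "0 \<in> R"
    and "f \<in> R \<Longrightarrow> g \<in> R \<Longrightarrow> f + g \<in> R"
    and "f \<in> R \<Longrightarrow> g \<in> R \<Longrightarrow> f * g \<in> R"
    and "f \<in> R \<Longrightarrow> g \<in> R \<Longrightarrow> f - g \<in> R"
proof -
  show "fps_const c \<in> R" using assms unfolding k_subalgebra_def by blast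
  show "0 \<in> R" using assms unfolding k_subalgebra_def by (metis fps_const_0_eq_0)
  show "f \<in> R \<Longrightarrow> g \<in> R \<Longrightarrow> f + g \<in> R" "f \<in> R \<Longrightarrow> g \<in> R \<Longrightarrow> f * g \<in> R"
    using assms unfolding k_subalgebra_def by blast+
  show "f \<in> R \<Longrightarrow> g \<in> R \<Longrightarrow> f - g \<in> R"
    using assms unfolding k_subalgebra_def by (metis diff_conv_add_uminus)
qed

lemma poly_alg_subset:
  assumes "k_subalgebra R" "F \<subseteq> R"
  shows "poly_alg F \<subseteq> R"
proof
  fix p assume "p \<in> poly_alg F"
  then show "p \<in> R"
    by (induction rule: poly_alg.induct) (use assms k_subalgebra_closed[OF assms(1)] in auto)
qed

lemma fps_X_power_conductor_degree_in_conductor: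
  assumes "curve_ring R"
  shows "fps_X ^ conductor_degree R \<in> conductor R"
proof -
  have "0 \<in> conductor R"
    using assms k_subalgebra_closed(2) unfolding curve_ring_def conductor_def by auto
  then obtain f where f: "f \<in> conductor R" "f \<noteq> 0"
    using assms unfolding curve_ring_def by blast
  define v where "v = subdegree f"
  define u where "u = fps_shift v f"
  have u0: "u $ 0 \<noteq> 0" using f(2) unfolding u_def v_def by simp
  have f_eq: "f = u * fps_X ^ v"
    unfolding u_def v_def by (simp add: fps_shift_times_fps_X_power)
  have "fps_X ^ v \<in> conductor R"
    unfolding conductor_def
  proof (intro CollectI allI)
    fix g
    have "fps_X ^ v * g = f * (inverse u * g)"
      using inverse_mult_eq_1[OF u0] f_eq by (simp add: algebra_simps)
    also have "\<dots> \<in> R" using f(1) unfolding conductor_def by blast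
    finally show "fps_X ^ v * g \<in> R" .
  qed
  then show ?thesis unfolding conductor_degree_def by (rule LeastI)
qed

lemma mem_curve_ring_if_vanishing_below_conductor:
  assumes "curve_ring R" "\<forall>m < conductor_degree R. f $ m = 0"
  shows "f \<in> R"
proof (cases "f = 0")
  case True
  then show ?thesis using assms(1) k_subalgebra_closed(2) unfolding curve_ring_def by blast
next
  case False
  let ?c = "conductor_degree R"
  have "?c \<le> subdegree f" using assms(2) False by (meson subdegree_geI)
  then have "f = fps_X ^ ?c * fps_shift ?c f"
    by (simp add: fps_shift_times_fps_X_power mult.commute)
  also have "\<dots> \<in> R"
    using fps_X_power_conductor_degree_in_conductor[OF assms(1)] unfolding conductor_def by blast
  finally show ?thesis .
qed

lemma fps_X_power_in_curve_ring:
  assumes R: "curve_ring R" and unit_times_X: "\<alpha> * fps_X ^ e \<in> R"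
    and bound: "enat (conductor_degree R) \<le> ord_unit \<alpha> + enat e"
  shows "fps_X ^ e \<in> R"
proof (cases "\<alpha> = 1")
  case True
  then show ?thesis using unit_times_X by simp
next
  case False
  then have c_le: "conductor_degree R \<le> subdegree (\<alpha> - 1) + e"
    using bound unfolding ord_unit_def by simp
  have "(\<alpha> - 1) * fps_X ^ e \<in> R"
  proof (rule mem_curve_ring_if_vanishing_below_conductor[OF R], intro allI impI)
    fix m assume "m < conductor_degree R"
    then have "e \<le> m \<Longrightarrow> (\<alpha> - 1) $ (m - e) = 0"
      using c_le by (intro nth_less_subdegree_zero) linarith
    then show "((\<alpha> - 1) * fps_X ^ e) $ m = 0"
      by (simp only: fps_X_power_mult_right_nth) simp
  qed
  then have "\<alpha> * fps_X ^ e - (\<alpha> - 1) * fps_X ^ e \<in> R"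
    using R unit_times_X k_subalgebra_closed(5) unfolding curve_ring_def by blast
  then show ?thesis by (simp add: algebra_simps)
qed

lemma fps_mult_nth_eq0_below:
  fixes f g :: "'a::field fps"
  assumes "\<forall>m < A. f $ m = 0" "\<forall>m < B. g $ m = 0" "n < A + B"
  shows "(f * g) $ n = 0"
proof (cases "f = 0 \<or> g = 0")
  case False
  then have "A \<le> subdegree f" "B \<le> subdegree g"
    using assms(1,2) by (auto intro: subdegree_geI)
  then show ?thesis using assms(3) by (intro fps_mult_nth_eq0) simp
qed auto

definition poly_approx :: "'a::field fps set \<Rightarrow> nat \<Rightarrow> 'a fps \<Rightarrow> bool" where
  "poly_approx F N h \<longleftrightarrow> (\<exists>p\<in>poly_alg F. \<forall>m<N. h $ m = p $ m)"

lemma poly_approx_0: "poly_approx F 0 h"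
  unfolding poly_approx_def by (blast intro: poly_alg.const)

lemma poly_approx_1: "poly_approx F 1 h"
  unfolding poly_approx_def by (rule bexI[of _ "fps_const (h $ 0)"]) (auto intro: poly_alg.const)

text \<open>The factors have no constant term, so approximating them below order \<open>N\<close>
  approximates their product below order \<open>N + 1\<close>.\<close>

lemma poly_approx_Suc_max_ideal_sq:
  fixes u w :: "nat \<Rightarrow> 'a::field fps"
  assumes approx: "\<forall>h\<in>R. poly_approx F N h" and N: "1 \<le> N"
    and uw: "\<forall>j<M. u j \<in> max_ideal R \<and> w j \<in> max_ideal R"
  shows "poly_approx F (Suc N) (\<Sum>j<M. u j * w j)"
  using uw
proof (induction M)
  case 0
  show ?case unfolding poly_approx_def using poly_alg.const[of 0 F] by force
next
  case (Suc M)
  then obtain p where p: "p \<in> poly_alg F" "\<forall>m<Suc N. (\<Sum>j<M. u j * w j) $ m = p $ m"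
    unfolding poly_approx_def by auto
  have u: "u M \<in> R" "u M $ 0 = 0" and w: "w M \<in> R" "w M $ 0 = 0"
    using Suc.prems unfolding max_ideal_def by auto
  obtain pu where pu: "pu \<in> poly_alg F" "\<forall>m<N. u M $ m = pu $ m"
    using approx u unfolding poly_approx_def by blast
  obtain pw where pw: "pw \<in> poly_alg F" "\<forall>m<N. w M $ m = pw $ m"
    using approx w unfolding poly_approx_def by blast
  have pw0: "pw $ 0 = 0" using pw(2) N w(2) by auto
  have split: "u M * w M - pu * pw = u M * (w M - pw) + (u M - pu) * pw"
    by (simp add: algebra_simps)
  have "(u M * w M - pu * pw) $ m = 0" if m: "m < Suc N" for m
  proof -
    have "(u M * (w M - pw)) $ m = 0"
      by (rule fps_mult_nth_eq0_below[where A=1 and B=N]) (use u pw m in auto)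
    moreover have "((u M - pu) * pw) $ m = 0"
      by (rule fps_mult_nth_eq0_below[where A=N and B=1]) (use pu pw0 m in auto)
    ultimately show ?thesis unfolding split by simp
  qed
  then have "\<forall>m<Suc N. (\<Sum>j<Suc M. u j * w j) $ m = (p + pu * pw) $ m"
    using p(2) by (auto simp: algebra_simps)
  moreover have "p + pu * pw \<in> poly_alg F"
    using p pu pw by (auto intro: poly_alg.add poly_alg.mult)
  ultimately show ?case unfolding poly_approx_def by blast
qed

lemma poly_approx_Suc_by_leading_term:
  fixes h :: "'a::field fps"
  assumes p: "p \<in> poly_alg F" "\<forall>m<N. h $ m = p $ m"
    and q: "q \<in> poly_alg F" "\<forall>m<N. q $ m = 0" "q $ N \<noteq> 0"
  shows "poly_approx F (Suc N) h"
proof -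
  define c where "c = (h - p) $ N / q $ N"
  have "h $ m = (p + fps_const c * q) $ m" if "m < Suc N" for m
  proof (cases "m < N")
    case True
    then show ?thesis using p(2) q(2) by simp
  next
    case False
    then have "m = N" using that by simp
    then show ?thesis using q(3) unfolding c_def by (simp add: field_simps)
  qed
  moreover have "p + fps_const c * q \<in> poly_alg F"
    using p(1) q(1) by (auto intro: poly_alg.add poly_alg.mult poly_alg.const)
  ultimately show ?thesis unfolding poly_approx_def by blast
qed

lemma poly_alg_element_of_max_ideal_valuation:
  assumes approx: "\<forall>h\<in>R. poly_approx F N h" and N: "1 \<le> N"
    and HK_values: "HK_set R \<subseteq> val_set F"
    and val: "N \<in> val_set (max_ideal R)"
  obtains q where "q \<in> poly_alg F" "\<forall>m<N. q $ m = 0" "q $ N \<noteq> 0"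
proof (cases "N \<in> HK_set R")
  case True
  then obtain f where f: "f \<in> F" "f \<noteq> 0" "subdegree f = N"
    using HK_values unfolding val_set_def by blast
  show ?thesis by (rule that[of f]) (use f poly_alg.gen[of f F] in auto)
next
  case False
  then obtain s where s: "s \<in> max_ideal_sq R" "s \<noteq> 0" "subdegree s = N"
    using val unfolding HK_set_def val_set_def by blast
  obtain M :: nat and u w where s_eq: "s = (\<Sum>j<M. u j * w j)"
    and uw: "\<forall>j<M. u j \<in> max_ideal R \<and> w j \<in> max_ideal R"
    using s(1) unfolding max_ideal_sq_def by blast
  obtain q where q: "q \<in> poly_alg F" "\<forall>m<Suc N. s $ m = q $ m"
    using poly_approx_Suc_max_ideal_sq[OF approx N uw] s_eq unfolding poly_approx_def by blast
  have "\<forall>m<N. q $ m = 0" "q $ N \<noteq> 0"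
    using q(2) s(2,3) by (auto simp flip: q(2)[rule_format])
  then show ?thesis using that q(1) by blast
qed

lemma poly_approx_of_mem_k_subalgebra:
  fixes R :: "'a::field fps set"
  assumes R: "k_subalgebra R" "F \<subseteq> R" and HK_values: "HK_set R \<subseteq> val_set F"
    and h: "h \<in> R"
  shows "poly_approx F N h"
proof (cases "N = 0")
  case True
  then show ?thesis by (simp add: poly_approx_0)
next
  case False
  then have "0 < N" by simp
  then show ?thesis using h
  proof (induction N arbitrary: h rule: nat_induct_non_zero)
    case 1
    show ?case by (rule poly_approx_1)
  next
    case (Suc N)
    obtain p where p: "p \<in> poly_alg F" "\<forall>m<N. h $ m = p $ m"
      using Suc.IH[OF Suc.prems] unfolding poly_approx_def by blast
    define g where "g = h - p"
    have g: "g \<in> R" "\<forall>m<N. g $ m = 0"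
      using k_subalgebra_closed(5)[OF R(1) Suc.prems] poly_alg_subset[OF R] p
      unfolding g_def by auto
    show ?case
    proof (cases "g $ N = 0")
      case True
      then have "\<forall>m<Suc N. h $ m = p $ m" using p(2) unfolding g_def
        by (simp add: less_Suc_eq)
      then show ?thesis using p(1) unfolding poly_approx_def by blast
    next
      case False
      have "g \<in> max_ideal R" unfolding max_ideal_def using g Suc.hyps by simp
      moreover have "g \<noteq> 0" "subdegree g = N" using False g(2) by (auto intro: subdegreeI)
      ultimately have val: "N \<in> val_set (max_ideal R)" unfolding val_set_def by blast
      have approx: "\<forall>h\<in>R. poly_approx F N h" using Suc.IH by blast
      obtain q where "q \<in> poly_alg F" "\<forall>m<N. q $ m = 0" "q $ N \<noteq> 0"
        by (rule poly_alg_element_of_max_ideal_valuation[OF approx _ HK_values val])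
          (use Suc.hyps in simp)
      then show ?thesis using poly_approx_Suc_by_leading_term p by blast
    qed
  qed
qed

theorem curve_ring_eq_pseries_alg:
  fixes R :: "'a::field fps set"
  assumes R: "curve_ring R" and FR: "F \<subseteq> R" and HK_values: "HK_set R \<subseteq> val_set F"
  shows "R = pseries_alg F"
proof
  have ks: "k_subalgebra R" using R unfolding curve_ring_def by blast
  show "R \<subseteq> pseries_alg F"
    using poly_approx_of_mem_k_subalgebra[OF ks FR HK_values]
    unfolding pseries_alg_def poly_approx_def by blast
  show "pseries_alg F \<subseteq> R"
  proof
    fix g assume "g \<in> pseries_alg F"
    then obtain p where p: "p \<in> poly_alg F" "\<forall>m<conductor_degree R. g $ m = p $ m"
      unfolding pseries_alg_def by blast
    have "g - p \<in> R" by (rule mem_curve_ring_if_vanishing_below_conductor[OF R]) (use p(2) in simp)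
    moreover have "p \<in> R" using poly_alg_subset[OF ks FR] p(1) by blast
    ultimately have "(g - p) + p \<in> R" using k_subalgebra_closed(3)[OF ks] by blast
    then show "g \<in> R" by simp
  qed
qed

theorem mainTheorem10:
  fixes R :: "('k::{alg_closed_field, field_char_0}) fps set"
    and n :: nat and a :: "nat \<Rightarrow> nat" and x \<alpha> :: "nat \<Rightarrow> 'k fps"
    and i d :: nat
  assumes R: "curve_ring R"
    and HK: "HK_generators R n a x"
    and x1: "x 1 = fps_X ^ a 1"
    and xi: "\<forall>j\<in>{2..n}. x j = \<alpha> j * fps_X ^ a j \<and> fps_nth (\<alpha> j) 0 = 1"
    and id: "2 \<le> i" "i \<le> d" "d \<le> n"
    and ocond: "ord_unit (\<alpha> d) + enat (a i) \<ge> enat (conductor_degree R)"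
    and ofin: "ord_unit (\<alpha> d) < \<infinity>"
  shows "R = pseries_alg ((x(d := fps_X ^ a d)) ` {1..n})
     \<and> HK_generators R n a (x(d := fps_X ^ a d))"
proof -
  define y where "y = x(d := fps_X ^ a d)"
  have mono: "strict_mono_on {1..n} a" and HK_set: "a ` {1..n} = HK_set R"
    and x: "\<forall>j\<in>{1..n}. x j \<in> R \<and> x j \<noteq> 0 \<and> subdegree (x j) = a j"
    using HK unfolding HK_generators_def HK_sequence_def by auto
  have "a i \<le> a d" using strict_mono_onD[OF mono, of i d] id by (cases "i = d") auto
  then have "enat (conductor_degree R) \<le> ord_unit (\<alpha> d) + enat (a d)"
    using ocond by (meson add_left_mono enat_ord_simps(1) order_trans)
  moreover have "\<alpha> d * fps_X ^ a d \<in> R"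
    using x xi id by (metis atLeastAtMost_iff dual_order.trans one_le_numeral)
  ultimately have "fps_X ^ a d \<in> R" using fps_X_power_in_curve_ring[OF R] by blast
  then have y: "\<forall>j\<in>{1..n}. y j \<in> R \<and> y j \<noteq> 0 \<and> subdegree (y j) = a j"
    using x unfolding y_def by auto
  then have "HK_generators R n a y" using HK unfolding HK_generators_def by blast
  moreover have "HK_set R \<subseteq> val_set (y ` {1..n})"
    using y unfolding HK_set[symmetric] val_set_def by force
  moreover have "y ` {1..n} \<subseteq> R" using y by blast
  ultimately show ?thesis using curve_ring_eq_pseries_alg[OF R] unfolding y_def by blast
qed

end
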